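(* The $K$-bilinear map $\psi:\mathfrak{stl}_4(R)\times\mathfrak{stl}_4(R)\to\mathcal W$ defined below is a Leibniz $2$-cocycle, i.e. for all $x,y,z\in\mathfrak{stl}_4(R)$, $$\psi(x,[y,z])+\psi([x,z],y)-\psi([x,y],z)=0.$$
   Context: $K$ is a unital commutative ring, $R$ a unital associative $K$-algebra, free as a $K$-module with a basis containing $1$. Leibniz algebra: $K$-bilinear bracket with $[x,[y,z]]=[[x,y],z]-[[x,z],y]$. $\mathfrak{stl}_4(R)$ is the Leibniz algebra over $K$ generated by $X_{ij}(a)$, $a\in R$, $1\le i\ne j\le 4$, subject to: $X_{ij}$ is $K$-linear in $a$; $[X_{ij}(a),X_{jk}(b)]=X_{ik}(ab)$ and $[X_{ij}(a),X_{ki}(b)]=-X_{kj}(ba)$ for distinct $i,j,k$; $[X_{ij}(a),X_{kl}(b)]=0$ for $j\ne k$, $i\ne l$. With $H$ the $K$-span of all $[X_{ij}(a),X_{ji}(b)]$, one has $\mathfrak{stl}_4(R)=H\oplus\bigoplus_{i\ne j}X_{ij}(R)$ and each $a\mapsto X_{ij}(a)$ is injective. $R_2:=R/\mathcal I_2$ where $\mathcal I_2=2R+R[R,R]$ is the ideal generated by all $2a$ and $ab-ba$; $\bar a$ denotes the class of $a$ (so $R_2$ is commutative and $\bar a=-\bar a$). $\mathcal W=R_2^6$, and $\epsilon_m(\bar a)$ ($1\le m\le 6$) is the element with $m$-th coordinate $\bar a$ and others $0$. Let $P$ be the set of quadruples $(i,j,k,l)$ with $\{i,j,k,l\}=\{1,2,3,4\}$;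 $S_4$ acts on $P$ componentwise, and $G=\{(1),(13),(24),(13)(24)\}$. Partition $P$ into the six sets $(\sigma G)((1,2,3,4))$, $\sigma G\in S_4/G$ (so $(i,j,k,l)$, $(k,j,i,l)$, $(i,l,k,j)$, $(k,l,i,j)$ lie in the same class); label these classes $1,\dots,6$ with the class of $(1,2,3,4)$ labelled $1$, and let $\theta:P\to\{1,\dots,6\}$ send a quadruple to its label. Define $\psi$ as the $K$-bilinear map with $\psi(X_{ij}(a),X_{kl}(b))=\epsilon_{\theta((i,j,k,l))}(\overline{ab})$ for $a,b\in R$ and $i,j,k,l$ pairwise distinct, $\psi(X_{ij}(a),X_{kl}(b))=0$ if $i,j,k,l$ are not pairwise distinct, and $\psi(h,x)=\psi(x,h)=0$ for $h\in H$. *)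

theory Defs
  imports Complex_Main
begin

definition K_algebra :: "('k::comm_ring_1 \<Rightarrow> 'r::ring_1 \<Rightarrow> 'r) \<Rightarrow> bool" where
  "K_algebra sR \<longleftrightarrow> module sR \<and>
     (\<forall>k a b. sR k (a * b) = sR k a * b \<and> sR k (a * b) = a * sR k b)"

definition free_with_one_basis :: "('k::comm_ring_1 \<Rightarrow> 'r::ring_1 \<Rightarrow> 'r) \<Rightarrow> bool" where
  "free_with_one_basis sR \<longleftrightarrow>
     (\<exists>B. 1 \<in> B \<and> \<not> module.dependent sR B \<and> module.span sR B = UNIV)"

inductive_set I2 :: "'r::ring_1 set" where
  gen_two: "2 * a \<in> I2"
| gen_comm: "a * b - b * a \<in> I2"
| zero: "0 \<in> I2"
| add: "x \<in> I2 \<Longrightarrow> y \<in> I2 \<Longrightarrow> x + y \<in> I2"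
| lmul: "x \<in> I2 \<Longrightarrow> r * x \<in> I2"
| rmul: "x \<in> I2 \<Longrightarrow> x * r \<in> I2"

definition leibniz_algebra ::
  "('k::comm_ring_1 \<Rightarrow> 'l::ab_group_add \<Rightarrow> 'l) \<Rightarrow> ('l \<Rightarrow> 'l \<Rightarrow> 'l) \<Rightarrow> bool" where
  "leibniz_algebra smul br \<longleftrightarrow> module smul \<and>
     (\<forall>x y z. br (x + y) z = br x z + br y z \<and> br z (x + y) = br z x + br z y) \<and>
     (\<forall>k x y. br (smul k x) y = smul k (br x y) \<and> br x (smul k y) = smul k (br x y)) \<and>
     (\<forall>x y z. br x (br y z) = br (br x y) z - br (br x z) y)"

definition Pairs4 :: "(nat \<times> nat) set" where
  "Pairs4 = {(i, j). i \<in> {1..4} \<and> j \<in> {1..4} \<and> i \<noteq> j}"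

definition P4 :: "(nat \<times> nat \<times> nat \<times> nat) set" where
  "P4 = {(i, j, k, l). {i, j, k, l} = {1, 2, 3, 4}}"

text \<open>The class (sigma G)(1,2,3,4) containing (i,j,k,l), G = {(1),(13),(24),(13)(24)}.\<close>
fun Gclass :: "nat \<times> nat \<times> nat \<times> nat \<Rightarrow> (nat \<times> nat \<times> nat \<times> nat) set" where
  "Gclass (i, j, k, l) = {(i, j, k, l), (k, j, i, l), (i, l, k, j), (k, l, i, j)}"

definition theta_labelling :: "(nat \<times> nat \<times> nat \<times> nat \<Rightarrow> nat) \<Rightarrow> bool" where
  "theta_labelling \<theta> \<longleftrightarrow>
     (\<forall>q\<in>P4. \<theta> q \<in> {1..6}) \<and>
     (\<forall>q\<in>P4. \<forall>q'\<in>P4. \<theta> q = \<theta> q' \<longleftrightarrow> q' \<in> Gclass q) \<and>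
     \<theta> (1, 2, 3, 4) = 1"

definition stl4_relations ::
  "('k::comm_ring_1 \<Rightarrow> 'l::ab_group_add \<Rightarrow> 'l) \<Rightarrow> ('l \<Rightarrow> 'l \<Rightarrow> 'l) \<Rightarrow>
   ('k \<Rightarrow> 'r::ring_1 \<Rightarrow> 'r) \<Rightarrow> (nat \<Rightarrow> nat \<Rightarrow> 'r \<Rightarrow> 'l) \<Rightarrow> bool" where
  "stl4_relations smul br sR X \<longleftrightarrow>
     (\<forall>(i, j)\<in>Pairs4. \<forall>a b k. X i j (a + b) = X i j a + X i j b \<and> X i j (sR k a) = smul k (X i j a)) \<and>
     (\<forall>i\<in>{1..4}. \<forall>j\<in>{1..4}. \<forall>k\<in>{1..4}. i \<noteq> j \<and> j \<noteq> k \<and> i \<noteq> k \<longrightarrow>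
        (\<forall>a b. br (X i j a) (X j k b) = X i k (a * b) \<and>
               br (X i j a) (X k i b) = - X k j (b * a))) \<and>
     (\<forall>(i, j)\<in>Pairs4. \<forall>(k, l)\<in>Pairs4. j \<noteq> k \<and> i \<noteq> l \<longrightarrow>
        (\<forall>a b. br (X i j a) (X k l b) = 0))"

definition Hspan ::
  "('k::comm_ring_1 \<Rightarrow> 'l::ab_group_add \<Rightarrow> 'l) \<Rightarrow> ('l \<Rightarrow> 'l \<Rightarrow> 'l) \<Rightarrow>
   (nat \<Rightarrow> nat \<Rightarrow> 'r \<Rightarrow> 'l) \<Rightarrow> 'l set" where
  "Hspan smul br X = module.span smul {br (X i j a) (X j i b) | i j a b. (i, j) \<in> Pairs4}"

definition Xsum :: "(nat \<Rightarrow> nat \<Rightarrow> 'r \<Rightarrow> 'l::ab_group_add) \<Rightarrow> (nat \<Rightarrow> nat \<Rightarrow> 'r) \<Rightarrow> 'l" where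
  "Xsum X c = (\<Sum>(i, j)\<in>Pairs4. X i j (c i j))"

definition stl4_decomposition ::
  "('k::comm_ring_1 \<Rightarrow> 'l::ab_group_add \<Rightarrow> 'l) \<Rightarrow> ('l \<Rightarrow> 'l \<Rightarrow> 'l) \<Rightarrow>
   (nat \<Rightarrow> nat \<Rightarrow> 'r \<Rightarrow> 'l) \<Rightarrow> bool" where
  "stl4_decomposition smul br X \<longleftrightarrow>
     (\<forall>x. \<exists>h\<in>Hspan smul br X. \<exists>c. x = h + Xsum X c) \<and>
     (\<forall>h\<in>Hspan smul br X. \<forall>c. h + Xsum X c = 0 \<longrightarrow>
        h = 0 \<and> (\<forall>(i, j)\<in>Pairs4. X i j (c i j) = 0)) \<and>
     (\<forall>(i, j)\<in>Pairs4. inj (X i j))"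

definition comp ::
  "('k::comm_ring_1 \<Rightarrow> 'l::ab_group_add \<Rightarrow> 'l) \<Rightarrow> ('l \<Rightarrow> 'l \<Rightarrow> 'l) \<Rightarrow>
   (nat \<Rightarrow> nat \<Rightarrow> 'r \<Rightarrow> 'l) \<Rightarrow> nat \<Rightarrow> nat \<Rightarrow> 'l \<Rightarrow> 'r" where
  "comp smul br X i j x =
     (THE a. \<exists>h c. h \<in> Hspan smul br X \<and> x = h + Xsum X c \<and> c i j = a)"

text \<open>A representative in R of the m-th coordinate (in R_2 = R / I_2) of psi(x,y):
  the K-bilinear extension of psi(X_ij(a),X_kl(b)) = eps_theta(ijkl)(ab), vanishing on H.
  Two elements of W = R_2^6 are equal iff all coordinate representatives agree modulo I2.\<close>
definition psi_rep ::
  "('k::comm_ring_1 \<Rightarrow> 'l::ab_group_add \<Rightarrow> 'l) \<Rightarrow> ('l \<Rightarrow> 'l \<Rightarrow> 'l) \<Rightarrow>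
   (nat \<Rightarrow> nat \<Rightarrow> 'r::ring_1 \<Rightarrow> 'l) \<Rightarrow> (nat \<times> nat \<times> nat \<times> nat \<Rightarrow> nat) \<Rightarrow>
   nat \<Rightarrow> 'l \<Rightarrow> 'l \<Rightarrow> 'r" where
  "psi_rep smul br X \<theta> m x y =
     (\<Sum>(i, j, k, l)\<in>{q \<in> P4. \<theta> q = m}. comp smul br X i j x * comp smul br X k l y)"

end

theory Submission
  imports Defs
begin

(* Modulo I_2 the coordinates of psi take values in the commutative ring R_2, in which 2 = 0.
   There psi is K-bilinear and vanishes on H, so the cocycle defect
   psi(x,[y,z]) + psi([x,z],y) + psi([x,y],z) is K-trilinear and need only be evaluated on the
   generators [X_ij(a),X_ji(b)] of H and X_ij(a). Such an element of H acts from either side on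
   X_kl(c) by the scalar (w(k) + w(l)) ab, where w(t) = 1 for t in {i,j} and 0 otherwise. Every
   quadruple in P contains i and j once each, so when one argument of the defect lies in H its two
   surviving terms add up to 2abc = 0, while brackets of two elements of H stay in H. On three root
   elements the defect has six potential contributions, and these cancel in pairs because the
   fibres of theta are G-invariant. *)

section \<open>The quotient ring R_2\<close>

lemma I2_uminus: "x \<in> I2 \<Longrightarrow> - x \<in> I2"
  using I2.lmul[of x "-1"] by simp

lemma I2_diff: "x \<in> I2 \<Longrightarrow> y \<in> I2 \<Longrightarrow> x - y \<in> I2"
  using I2.add[of x "- y"] I2_uminus[of y] by simp

quotient_type (overloaded) 'a r2 = "'a::ring_1" / "\<lambda>x y. x - y \<in> I2"
proof (rule equivpI)
  show "reflp (\<lambda>x y::'a. x - y \<in> I2)"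
    by (simp add: reflp_def I2.zero)
  show "symp (\<lambda>x y::'a. x - y \<in> I2)"
    unfolding symp_def using I2_uminus by fastforce
  show "transp (\<lambda>x y::'a. x - y \<in> I2)"
    unfolding transp_def using I2.add by fastforce
qed

instantiation r2 :: (ring_1) comm_ring
begin

lift_definition zero_r2 :: "'a r2" is 0 .

lift_definition plus_r2 :: "'a r2 \<Rightarrow> 'a r2 \<Rightarrow> 'a r2" is "(+)"
proof -
  fix x y x' y' :: 'a
  assume "x - y \<in> I2" "x' - y' \<in> I2"
  then have "(x - y) + (x' - y') \<in> I2" by (rule I2.add)
  then show "x + x' - (y + y') \<in> I2" by (simp add: algebra_simps)
qed

lift_definition uminus_r2 :: "'a r2 \<Rightarrow> 'a r2" is uminus
proof -
  fix x y :: 'a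
  assume "x - y \<in> I2"
  then have "- (x - y) \<in> I2" by (rule I2_uminus)
  then show "- x - - y \<in> I2" by (simp add: algebra_simps)
qed

lift_definition minus_r2 :: "'a r2 \<Rightarrow> 'a r2 \<Rightarrow> 'a r2" is "(-)"
proof -
  fix x y x' y' :: 'a
  assume "x - y \<in> I2" "x' - y' \<in> I2"
  then have "(x - y) - (x' - y') \<in> I2" by (rule I2_diff)
  then show "x - x' - (y - y') \<in> I2" by (simp add: algebra_simps)
qed

lift_definition times_r2 :: "'a r2 \<Rightarrow> 'a r2 \<Rightarrow> 'a r2" is "(*)"
proof -
  fix x y x' y' :: 'a
  assume "x - y \<in> I2" "x' - y' \<in> I2"
  then have "x * (x' - y') + (x - y) * y' \<in> I2"
    by (intro I2.add I2.lmul I2.rmul)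
  then show "x * x' - y * y' \<in> I2" by (simp add: algebra_simps)
qed

instance
proof
  fix a b c :: "'a r2"
  show "a * b * c = a * (b * c)" by transfer (simp add: I2.zero mult.assoc)
  show "a * b = b * a" by transfer (rule I2.gen_comm)
  show "a + b + c = a + (b + c)" by transfer (simp add: I2.zero add.assoc)
  show "a + b = b + a" by transfer (simp add: I2.zero add.commute)
  show "0 + a = a" by transfer (simp add: I2.zero)
  show "- a + a = 0" by transfer (simp add: I2.zero)
  show "a - b = a + - b" by transfer (simp add: I2.zero)
  show "(a + b) * c = a * c + b * c" by transfer (simp add: I2.zero distrib_right)
qed

end

lemma r2_add_self [simp]: "(x :: 'a::ring_1 r2) + x = 0"
  by transfer (simp add: mult_2[symmetric] I2.gen_two)

lemma r2_uminus [simp]: "- (x :: 'a::ring_1 r2) = x"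
  using add_implies_diff[OF r2_add_self[of x]] by simp

lemma abs_r2_add: "abs_r2 (x + y) = abs_r2 x + abs_r2 y"
  by (simp add: plus_r2.abs_eq)

lemma abs_r2_mult: "abs_r2 (x * y) = abs_r2 x * abs_r2 y"
  by (simp add: times_r2.abs_eq)

lemma abs_r2_uminus: "abs_r2 (- x) = abs_r2 x"
  using uminus_r2.abs_eq[of x] by simp

lemma abs_r2_diff: "abs_r2 (x - y) = abs_r2 x + abs_r2 y"
  using minus_r2.abs_eq[of x y] by (metis diff_conv_add_uminus r2_uminus)

lemma abs_r2_1_mult [simp]: "abs_r2 1 * x = x"
  by transfer (simp add: I2.zero)

lemma abs_r2_0: "abs_r2 0 = 0"
  by (simp add: zero_r2_def)

lemma abs_r2_eq_0_iff: "abs_r2 x = 0 \<longleftrightarrow> x \<in> I2"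
  by (simp add: zero_r2_def r2.abs_eq_iff)

lemma abs_r2_sum: "abs_r2 (sum f A) = (\<Sum>a\<in>A. abs_r2 (f a))"
  by (induction A rule: infinite_finite_induct) (auto simp: abs_r2_0 abs_r2_add)

section \<open>Quadruples of indices\<close>

lemma Pairs4_iff: "(i, j) \<in> Pairs4 \<longleftrightarrow> i \<in> {1..4} \<and> j \<in> {1..4} \<and> i \<noteq> j"
  by (simp add: Pairs4_def)

lemma finite_Pairs4 [simp]: "finite Pairs4"
  by (rule finite_subset[of _ "{1..4} \<times> {1..4}"]) (auto simp: Pairs4_iff)

lemma P4_iff: "(i, j, k, l) \<in> P4 \<longleftrightarrow>
   i \<in> {1..4} \<and> j \<in> {1..4} \<and> k \<in> {1..4} \<and> l \<in> {1..4} \<and>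
   i \<noteq> j \<and> i \<noteq> k \<and> i \<noteq> l \<and> j \<noteq> k \<and> j \<noteq> l \<and> k \<noteq> l"
proof
  assume "(i, j, k, l) \<in> P4"
  then have e: "{i, j, k, l} = {1, 2, 3, 4}" by (simp add: P4_def)
  then have "card {i, j, k, l} = 4" by simp
  then have "i \<noteq> j \<and> i \<noteq> k \<and> i \<noteq> l \<and> j \<noteq> k \<and> j \<noteq> l \<and> k \<noteq> l"
    by (auto simp: card_insert_if split: if_splits)
  moreover have "{i, j, k, l} \<subseteq> {1..4}" unfolding e by auto
  ultimately show "i \<in> {1..4} \<and> j \<in> {1..4} \<and> k \<in> {1..4} \<and> l \<in> {1..4} \<and>
      i \<noteq> j \<and> i \<noteq> k \<and> i \<noteq> l \<and> j \<noteq> k \<and> j \<noteq> l \<and> k \<noteq> l"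
    by simp
next
  assume "i \<in> {1..4} \<and> j \<in> {1..4} \<and> k \<in> {1..4} \<and> l \<in> {1..4} \<and>
      i \<noteq> j \<and> i \<noteq> k \<and> i \<noteq> l \<and> j \<noteq> k \<and> j \<noteq> l \<and> k \<noteq> l"
  then have "{i, j, k, l} \<subseteq> {1..4}" and "card {i, j, k, l} = card {1..4::nat}" by auto
  then have "{i, j, k, l} = {1..4}" by (simp add: card_subset_eq)
  moreover have "{1..4::nat} = {1, 2, 3, 4}" by auto
  ultimately show "(i, j, k, l) \<in> P4" by (simp add: P4_def)
qed

lemma finite_P4 [simp]: "finite P4"
  by (rule finite_subset[of _ "{1..4::nat} \<times> {1..4::nat} \<times> {1..4::nat} \<times> {1..4::nat}"])
    (auto simp: P4_iff)

lemma P4_covers: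
  assumes "(a, b, c, d) \<in> P4" and "x \<in> {1..4}"
  shows "x = a \<or> x = b \<or> x = c \<or> x = d"
proof -
  have "{a, b, c, d} = {1, 2, 3, 4}" using assms(1) by (simp add: P4_def)
  moreover have "x \<in> {1, 2, 3, 4}" using assms(2) by auto
  ultimately have "x \<in> {a, b, c, d}" by (simp only:)
  then show ?thesis by simp
qed

lemma P4_Pairs4: "(i, j, k, l) \<in> P4 \<Longrightarrow> (i, j) \<in> Pairs4 \<and> (k, l) \<in> Pairs4"
  by (simp add: P4_iff Pairs4_iff)

lemma ex_third_index: "\<exists>t\<in>{1..4::nat}. t \<noteq> i \<and> t \<noteq> j"
  by (rule bexI[of _ "if i \<noteq> 1 \<and> j \<noteq> 1 then 1 else if i \<noteq> 2 \<and> j \<noteq> 2 then 2 else 3"]) auto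

lemma off_diagonal_cases:
  assumes "(i, j) \<in> Pairs4" and "(k, l) \<in> Pairs4" and "(k, l) \<noteq> (i, j)" and "(k, l) \<noteq> (j, i)"
  obtains "k = i" "l \<notin> {i, j}" | "k = j" "l \<notin> {i, j}" | "l = i" "k \<notin> {i, j}" | "l = j" "k \<notin> {i, j}"
    | "k \<notin> {i, j}" "l \<notin> {i, j}"
  using assms by (auto simp: Pairs4_iff)

definition G_invariant :: "(nat \<times> nat \<times> nat \<times> nat) set \<Rightarrow> bool" where
  "G_invariant S \<longleftrightarrow> S \<subseteq> P4 \<and>
     (\<forall>i j k l. (i, j, k, l) \<in> S \<longrightarrow> (k, j, i, l) \<in> S \<and> (i, l, k, j) \<in> S)"

lemma theta_labelling_Gclass:
  assumes "theta_labelling \<theta>" and "q \<in> P4" and "q' \<in> Gclass q"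
  shows "\<theta> q' = \<theta> q"
proof -
  obtain i j k l where "q = (i, j, k, l)" by (cases q) auto
  then have "q' \<in> P4" using assms(2,3) by (auto simp: P4_iff)
  then show ?thesis using assms unfolding theta_labelling_def by metis
qed

lemma G_invariant_theta_fibre:
  assumes "theta_labelling \<theta>"
  shows "G_invariant {q \<in> P4. \<theta> q = m}"
  unfolding G_invariant_def
proof (intro conjI allI impI)
  fix i j k l
  assume q: "(i, j, k, l) \<in> {q \<in> P4. \<theta> q = m}"
  show "(k, j, i, l) \<in> {q \<in> P4. \<theta> q = m}" "(i, l, k, j) \<in> {q \<in> P4. \<theta> q = m}"
    using q theta_labelling_Gclass[OF assms, of "(i, j, k, l)"] by (auto simp: P4_iff)
qed auto

lemma G_invariant_swap13: "G_invariant S \<Longrightarrow> (k, j, i, l) \<in> S \<longleftrightarrow> (i, j, k, l) \<in> S"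
  unfolding G_invariant_def by blast

lemma G_invariant_swap24: "G_invariant S \<Longrightarrow> (i, l, k, j) \<in> S \<longleftrightarrow> (i, j, k, l) \<in> S"
  unfolding G_invariant_def by blast

lemma G_invariant_swap_pairs: "G_invariant S \<Longrightarrow> (k, l, i, j) \<in> S \<longleftrightarrow> (i, j, k, l) \<in> S"
  using G_invariant_swap13 G_invariant_swap24 by metis

lemma G_invariant_in_P4: "G_invariant S \<Longrightarrow> q \<in> S \<Longrightarrow> q \<in> P4"
  unfolding G_invariant_def by (rule subsetD[OF conjunct1])

lemma G_invariant_distinct: "G_invariant S \<Longrightarrow> (a, b, c, d) \<in> S \<Longrightarrow> distinct [a, b, c, d]"
  using G_invariant_in_P4[of S "(a, b, c, d)"] by (simp add: P4_iff)

lemma G_invariant_covers: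
  "G_invariant S \<Longrightarrow> (a, b, c, d) \<in> S \<Longrightarrow> x \<in> {1..4} \<Longrightarrow> x = a \<or> x = b \<or> x = c \<or> x = d"
  using G_invariant_in_P4 P4_covers by blast

(* The six contributions to the cocycle defect on X_ij(a), X_kl(b), X_pq(c), each equal to abc. *)
lemma G_invariant_six_terms:
  fixes t :: "'a::ab_group_add"
  assumes S: "G_invariant S" and t: "t + t = 0"
    and range: "i \<in> {1..4}" "j \<in> {1..4}" "k \<in> {1..4}" "l \<in> {1..4}" "p \<in> {1..4}" "q \<in> {1..4}"
    and neq: "i \<noteq> j" "k \<noteq> l" "p \<noteq> q"
  shows "(if l = p \<and> (i, j, k, q) \<in> S then t else 0) + (if k = q \<and> (i, j, p, l) \<in> S then t else 0)
       + (if j = p \<and> (i, q, k, l) \<in> S then t else 0) + (if i = q \<and> (p, j, k, l) \<in> S then t else 0)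
       + (if j = k \<and> (i, l, p, q) \<in> S then t else 0) + (if i = l \<and> (k, j, p, q) \<in> S then t else 0) = 0"
proof -
  note swap13 = G_invariant_swap13[OF S] and swap24 = G_invariant_swap24[OF S]
    and covers = G_invariant_covers[OF S] and distinct = G_invariant_distinct[OF S]
  have not_in_S: "\<not> distinct [a, b, c, d] \<Longrightarrow> (a, b, c, d) \<notin> S" for a b c d
    using distinct by blast
  consider (both) "l = p" "k = q" | (left) "l = p" "k \<noteq> q" | (right) "l \<noteq> p" "k = q"
    | (neither) "l \<noteq> p" "k \<noteq> q"
    by blast
  then show ?thesis
  proof cases
    case both
    then show ?thesis by (simp add: not_in_S)
  next
    case left
    consider "l = i" | "l = j" | "l \<noteq> i" "l \<noteq> j" by blast
    then show ?thesis
    proof cases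
      case 1
      then show ?thesis using left swap13[of k j i q] by (auto simp: not_in_S t)
    next
      case 2
      then show ?thesis using left swap24[of i q k j] by (auto simp: not_in_S t)
    next
      case 3
      then show ?thesis using left covers[of i j k q l] range neq by (auto simp: not_in_S)
    qed
  next
    case right
    consider "k = i" | "k = j" | "k \<noteq> i" "k \<noteq> j" by blast
    then show ?thesis
    proof cases
      case 1
      then show ?thesis using right swap13[of p j i l] by (auto simp: not_in_S t)
    next
      case 2
      then show ?thesis using right swap24[of i l p j] by (auto simp: not_in_S t)
    next
      case 3
      then show ?thesis using right covers[of i j p l k] range neq by (auto simp: not_in_S)
    qed
  next
    case neither
    have "j = p \<and> (i, q, k, l) \<in> S \<longleftrightarrow> j = k \<and> (i, l, p, q) \<in> S"
      using neither range neq covers[of i q k l p] covers[of i l p q j] swap24[of i q k l] distinct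
      by auto
    moreover have "i = q \<and> (p, j, k, l) \<in> S \<longleftrightarrow> i = l \<and> (k, j, p, q) \<in> S"
      using neither range neq covers[of p j k l i] covers[of k j p q i] swap13[of p j k l] distinct
      by auto
    ultimately show ?thesis using neither by (simp add: t)
  qed
qed

definition H_weight :: "nat \<Rightarrow> nat \<Rightarrow> 'r::ring_1 \<Rightarrow> 'r \<Rightarrow> nat \<Rightarrow> 'r r2" where
  "H_weight i j a b t = (if t = i \<or> t = j then abs_r2 a * abs_r2 b else 0)"

lemma H_weight_sum_P4:
  assumes "(i, j) \<in> Pairs4" and "(k, l, p, q) \<in> P4"
  shows "H_weight i j a b k + H_weight i j a b l + H_weight i j a b p + H_weight i j a b q = 0"
proof -
  have "i = k \<or> i = l \<or> i = p \<or> i = q" and "j = k \<or> j = l \<or> j = p \<or> j = q"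
    using assms P4_covers by (auto simp: Pairs4_iff)
  moreover have "i \<noteq> j" "k \<noteq> l" "k \<noteq> p" "k \<noteq> q" "l \<noteq> p" "l \<noteq> q" "p \<noteq> q"
    using assms by (auto simp: P4_iff Pairs4_iff)
  ultimately show ?thesis
    by (elim disjE) (simp_all add: H_weight_def)
qed

lemma H_weight_chain:
  assumes "abs_r2 e1 = (H_weight i j a b k + H_weight i j a b t) * abs_r2 c"
    and "abs_r2 e2 = (H_weight i j a b t + H_weight i j a b l) * abs_r2 1"
  shows "abs_r2 (e1 + c * e2) = (H_weight i j a b k + H_weight i j a b l) * abs_r2 c"
  using assms by (simp add: abs_r2_add abs_r2_mult algebra_simps)

section \<open>Root coordinates in stl_4(R)\<close>

locale stl4 =
  fixes smul :: "'k::comm_ring_1 \<Rightarrow> 'l::ab_group_add \<Rightarrow> 'l"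
    and br :: "'l \<Rightarrow> 'l \<Rightarrow> 'l"
    and sR :: "'k \<Rightarrow> 'r::ring_1 \<Rightarrow> 'r"
    and X :: "nat \<Rightarrow> nat \<Rightarrow> 'r \<Rightarrow> 'l"
    and \<theta> :: "nat \<times> nat \<times> nat \<times> nat \<Rightarrow> nat"
  assumes algebra: "K_algebra sR"
    and leibniz: "leibniz_algebra smul br"
    and relations: "stl4_relations smul br sR X"
    and decomposition: "stl4_decomposition smul br X"
    and labelling: "theta_labelling \<theta>"
begin

sublocale module smul
  using leibniz by (simp add: leibniz_algebra_def)

lemma br_add_left: "br (x + y) z = br x z + br y z"
  using leibniz by (simp add: leibniz_algebra_def)

lemma br_add_right: "br z (x + y) = br z x + br z y"
  using leibniz by (simp add: leibniz_algebra_def)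

lemma br_scale_left: "br (smul k x) y = smul k (br x y)"
  using leibniz by (simp add: leibniz_algebra_def)

lemma br_scale_right: "br x (smul k y) = smul k (br x y)"
  using leibniz by (simp add: leibniz_algebra_def)

lemma br_br_right: "br x (br y z) = br (br x y) z - br (br x z) y"
  using leibniz by (simp add: leibniz_algebra_def)

lemma br_br_left: "br (br x y) z = br x (br y z) + br (br x z) y"
  by (simp add: br_br_right)

lemma br_zero_left [simp]: "br 0 y = 0"
  using br_add_left[of 0 0 y] by simp

lemma br_zero_right [simp]: "br y 0 = 0"
  using br_add_right[of y 0 0] by simp

lemma br_minus_left [simp]: "br (- x) y = - br x y"
  by (metis add.inverse_unique br_add_left br_zero_left right_minus)

lemma br_minus_right [simp]: "br y (- x) = - br y x"
  by (metis add.inverse_unique br_add_right br_zero_right right_minus)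

lemma sR_eq_mult: "sR k a = sR k 1 * a"
  using algebra unfolding K_algebra_def by (metis mult_1)

lemma X_add: "(i, j) \<in> Pairs4 \<Longrightarrow> X i j (a + b) = X i j a + X i j b"
  using conjunct1[OF relations[unfolded stl4_relations_def]] by fast

lemma X_scale: "(i, j) \<in> Pairs4 \<Longrightarrow> X i j (sR k a) = smul k (X i j a)"
  using conjunct1[OF relations[unfolded stl4_relations_def]] by fast

lemma X_zero: "(i, j) \<in> Pairs4 \<Longrightarrow> X i j 0 = 0"
  using X_add[of i j 0 0] by simp

lemma X_minus: "(i, j) \<in> Pairs4 \<Longrightarrow> X i j (- a) = - X i j a"
  by (metis add.inverse_unique X_add X_zero right_minus)

lemma X_diff: "(i, j) \<in> Pairs4 \<Longrightarrow> X i j (a - b) = X i j a - X i j b"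
  using X_add[of i j a "- b"] X_minus[of i j b] by simp

lemma br_X_X_chain:
  "i \<in> {1..4} \<Longrightarrow> j \<in> {1..4} \<Longrightarrow> k \<in> {1..4} \<Longrightarrow> i \<noteq> j \<Longrightarrow> j \<noteq> k \<Longrightarrow> i \<noteq> k \<Longrightarrow>
   br (X i j a) (X j k b) = X i k (a * b)"
  using conjunct1[OF conjunct2[OF relations[unfolded stl4_relations_def]]] by blast

lemma br_X_X_back:
  "i \<in> {1..4} \<Longrightarrow> j \<in> {1..4} \<Longrightarrow> k \<in> {1..4} \<Longrightarrow> i \<noteq> j \<Longrightarrow> j \<noteq> k \<Longrightarrow> i \<noteq> k \<Longrightarrow>
   br (X i j a) (X k i b) = - X k j (b * a)"
  using conjunct1[OF conjunct2[OF relations[unfolded stl4_relations_def]]] by blast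

lemma br_X_X_zero:
  "(i, j) \<in> Pairs4 \<Longrightarrow> (k, l) \<in> Pairs4 \<Longrightarrow> j \<noteq> k \<Longrightarrow> i \<noteq> l \<Longrightarrow> br (X i j a) (X k l b) = 0"
  using conjunct2[OF conjunct2[OF relations[unfolded stl4_relations_def]]] by fast

lemmas br_X_X = br_X_X_chain br_X_X_back br_X_X_zero

definition Hgen :: "'l set" where
  "Hgen = {br (X i j a) (X j i b) | i j a b. (i, j) \<in> Pairs4}"

definition Xgen :: "'l set" where
  "Xgen = {X i j a | i j a. (i, j) \<in> Pairs4}"

abbreviation H :: "'l set" where
  "H \<equiv> Hspan smul br X"

lemma H_eq_span: "H = span Hgen"
  by (simp add: Hspan_def Hgen_def)

lemma H_add: "x \<in> H \<Longrightarrow> y \<in> H \<Longrightarrow> x + y \<in> H"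
  by (simp add: H_eq_span span_add)

lemma H_diff: "x \<in> H \<Longrightarrow> y \<in> H \<Longrightarrow> x - y \<in> H"
  by (simp add: H_eq_span span_diff)

lemma H_scale: "x \<in> H \<Longrightarrow> smul k x \<in> H"
  by (simp add: H_eq_span span_scale)

lemma H_zero: "0 \<in> H"
  by (simp add: H_eq_span span_zero)

lemma Hgen_subset_H: "Hgen \<subseteq> H"
  by (simp add: H_eq_span span_superset)

lemma br_X_X_opposite_in_H: "(i, j) \<in> Pairs4 \<Longrightarrow> br (X i j a) (X j i b) \<in> H"
  using Hgen_subset_H unfolding Hgen_def by blast

lemma decomposition_exists: "\<exists>h c. h \<in> H \<and> x = h + Xsum X c"
  using decomposition unfolding stl4_decomposition_def by blast

lemma decomposition_zero:
  "h \<in> H \<Longrightarrow> h + Xsum X c = 0 \<Longrightarrow> (i, j) \<in> Pairs4 \<Longrightarrow> X i j (c i j) = 0"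
  using decomposition unfolding stl4_decomposition_def by fast

lemma X_inj: "(i, j) \<in> Pairs4 \<Longrightarrow> X i j a = X i j b \<Longrightarrow> a = b"
  using decomposition unfolding stl4_decomposition_def inj_def by fast

lemma Xsum_diff: "Xsum X c - Xsum X c' = Xsum X (\<lambda>i j. c i j - c' i j)"
  unfolding Xsum_def sum_subtractf[symmetric] by (rule sum.cong) (auto simp: X_diff)

lemma Xsum_add: "Xsum X c + Xsum X c' = Xsum X (\<lambda>i j. c i j + c' i j)"
  unfolding Xsum_def sum.distrib[symmetric] by (rule sum.cong) (auto simp: X_add)

lemma Xsum_scale: "smul k (Xsum X c) = Xsum X (\<lambda>i j. sR k (c i j))"
  unfolding Xsum_def scale_sum_right by (rule sum.cong) (auto simp: X_scale)

lemma Xsum_zero: "Xsum X (\<lambda>i j. 0) = 0"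
  unfolding Xsum_def by (rule sum.neutral) (auto simp: X_zero)

lemma Xsum_single:
  assumes "(k, l) \<in> Pairs4"
  shows "Xsum X (\<lambda>i j. if i = k \<and> j = l then a else 0) = X k l a"
proof -
  have "Xsum X (\<lambda>i j. if i = k \<and> j = l then a else 0) = (\<Sum>p\<in>Pairs4. if p = (k, l) then X k l a else 0)"
    unfolding Xsum_def by (rule sum.cong) (auto simp: X_zero split: if_splits)
  also have "\<dots> = X k l a" using assms by simp
  finally show ?thesis .
qed

lemma decomposition_unique:
  assumes "h \<in> H" "h' \<in> H" "h + Xsum X c = h' + Xsum X c'" "(i, j) \<in> Pairs4"
  shows "c i j = c' i j"
proof -
  have "(h - h') + Xsum X (\<lambda>i j. c i j - c' i j) = 0"
    using assms(3) by (simp add: Xsum_diff[symmetric] algebra_simps)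
  then have "X i j (c i j - c' i j) = X i j 0"
    using decomposition_zero[OF H_diff[OF assms(1,2)]] assms(4) X_zero by simp
  then show ?thesis using X_inj assms(4) by fastforce
qed

lemma span_generators: "x \<in> span (Hgen \<union> Xgen)"
proof -
  obtain h c where h: "h \<in> H" "x = h + Xsum X c"
    using decomposition_exists by blast
  have "h \<in> span (Hgen \<union> Xgen)"
    using h(1) span_mono[of Hgen "Hgen \<union> Xgen"] by (auto simp: H_eq_span)
  moreover have "Xsum X c \<in> span (Hgen \<union> Xgen)"
    unfolding Xsum_def by (rule span_sum) (auto intro!: span_base simp: Xgen_def)
  ultimately show ?thesis using h(2) span_add by simp
qed

lemma eq_0_if_vanishes_on_generators:
  fixes f :: "'l \<Rightarrow> 'a::comm_ring"
  assumes add: "\<And>x y. f (x + y) = f x + f y"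
    and scale: "\<And>k x. f (smul k x) = s k * f x"
    and generators: "\<And>g. g \<in> Hgen \<union> Xgen \<Longrightarrow> f g = 0"
  shows "f x = 0"
  using span_generators[of x]
proof (induction rule: span_induct)
  case base
  have "f 0 = 0" using add[of 0 0] by simp
  then show ?case by (auto intro!: subspaceI simp: add scale)
qed (rule generators)

abbreviation coord :: "nat \<Rightarrow> nat \<Rightarrow> 'l \<Rightarrow> 'r" where
  "coord \<equiv> comp smul br X"

lemma coord_eq: "h \<in> H \<Longrightarrow> (i, j) \<in> Pairs4 \<Longrightarrow> coord i j (h + Xsum X c) = c i j"
  unfolding comp_def by (rule the_equality) (blast, metis decomposition_unique)

lemma coord_add:
  assumes "(i, j) \<in> Pairs4"
  shows "coord i j (x + y) = coord i j x + coord i j y"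
proof -
  obtain h c h' c' where h: "h \<in> H" "x = h + Xsum X c" and h': "h' \<in> H" "y = h' + Xsum X c'"
    using decomposition_exists by blast
  have "x + y = (h + h') + Xsum X (\<lambda>i j. c i j + c' i j)"
    using h h' by (simp add: Xsum_add[symmetric] algebra_simps)
  then have "coord i j (x + y) = c i j + c' i j"
    using coord_eq[OF H_add[OF h(1) h'(1)] assms] by simp
  with h h' assms show ?thesis by (simp add: coord_eq)
qed

lemma coord_scale:
  assumes "(i, j) \<in> Pairs4"
  shows "coord i j (smul k x) = sR k 1 * coord i j x"
proof -
  obtain h c where h: "h \<in> H" "x = h + Xsum X c"
    using decomposition_exists by blast
  have "smul k x = smul k h + Xsum X (\<lambda>i j. sR k (c i j))"
    using h by (simp add: Xsum_scale[symmetric] scale_right_distrib)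
  then have "coord i j (smul k x) = sR k (c i j)"
    using h assms by (simp add: coord_eq H_scale)
  then show ?thesis using h assms sR_eq_mult[of k "c i j"] by (simp add: coord_eq)
qed

lemma coord_H: "h \<in> H \<Longrightarrow> (i, j) \<in> Pairs4 \<Longrightarrow> coord i j h = 0"
  using coord_eq[of h i j "\<lambda>i j. 0"] by (simp add: Xsum_zero)

lemma coord_X:
  "(i, j) \<in> Pairs4 \<Longrightarrow> (k, l) \<in> Pairs4 \<Longrightarrow> coord i j (X k l a) = (if i = k \<and> j = l then a else 0)"
  using coord_eq[of 0 i j "\<lambda>i j. if i = k \<and> j = l then a else 0"] by (simp add: Xsum_single H_zero)

abbreviation fibre :: "nat \<Rightarrow> (nat \<times> nat \<times> nat \<times> nat) set" where
  "fibre m \<equiv> {q \<in> P4. \<theta> q = m}"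

definition psi :: "nat \<Rightarrow> 'l \<Rightarrow> 'l \<Rightarrow> 'r r2" where
  "psi m x y = abs_r2 (psi_rep smul br X \<theta> m x y)"

lemma psi_eq_sum:
  "psi m x y = (\<Sum>(i, j, k, l)\<in>fibre m. abs_r2 (coord i j x) * abs_r2 (coord k l y))"
  unfolding psi_def psi_rep_def abs_r2_sum by (rule sum.cong) (auto simp: abs_r2_mult)

lemma psi_add_left: "psi m (x + y) z = psi m x z + psi m y z"
  unfolding psi_eq_sum sum.distrib[symmetric]
  by (rule sum.cong) (auto simp: coord_add P4_Pairs4 abs_r2_add distrib_right)

lemma psi_add_right: "psi m z (x + y) = psi m z x + psi m z y"
  unfolding psi_eq_sum sum.distrib[symmetric]
  by (rule sum.cong) (auto simp: coord_add P4_Pairs4 abs_r2_add distrib_left)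

lemma psi_scale_left: "psi m (smul k x) z = abs_r2 (sR k 1) * psi m x z"
  unfolding psi_eq_sum sum_distrib_left
  by (rule sum.cong) (auto simp: coord_scale P4_Pairs4 abs_r2_mult mult.assoc)

lemma psi_scale_right: "psi m z (smul k x) = abs_r2 (sR k 1) * psi m z x"
  unfolding psi_eq_sum sum_distrib_left
  by (rule sum.cong) (auto simp: coord_scale P4_Pairs4 abs_r2_mult ac_simps)

lemma psi_H_left: "h \<in> H \<Longrightarrow> psi m h z = 0"
  unfolding psi_eq_sum by (rule sum.neutral) (auto simp: coord_H P4_Pairs4 abs_r2_0)

lemma psi_H_right: "h \<in> H \<Longrightarrow> psi m z h = 0"
  unfolding psi_eq_sum by (rule sum.neutral) (auto simp: coord_H P4_Pairs4 abs_r2_0)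

lemma psi_zero_left [simp]: "psi m 0 z = 0"
  by (rule psi_H_left[OF H_zero])

lemma psi_zero_right [simp]: "psi m z 0 = 0"
  by (rule psi_H_right[OF H_zero])

lemma psi_minus_right [simp]: "psi m z (- x) = psi m z x"
  by (metis add.inverse_unique psi_add_right psi_zero_right r2_uminus right_minus)

lemma psi_minus_left [simp]: "psi m (- x) z = psi m x z"
  by (metis add.inverse_unique psi_add_left psi_zero_left r2_uminus right_minus)

lemma psi_X_X:
  assumes "(i, j) \<in> Pairs4" and "(k, l) \<in> Pairs4"
  shows "psi m (X i j a) (X k l b) =
    (if (i, j, k, l) \<in> fibre m then abs_r2 a * abs_r2 b else 0)"
proof -
  have "psi m (X i j a) (X k l b) =
      (\<Sum>q\<in>fibre m. if q = (i, j, k, l) then abs_r2 a * abs_r2 b else 0)"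
    unfolding psi_eq_sum
    by (rule sum.cong) (auto simp: coord_X assms P4_Pairs4 abs_r2_0 split: if_splits)
  then show ?thesis by simp
qed

lemma psi_X_X_commute:
  assumes "(i, j) \<in> Pairs4" and "(k, l) \<in> Pairs4"
  shows "psi m (X i j a) (X k l b) = psi m (X k l b) (X i j a)"
  using assms G_invariant_swap_pairs[OF G_invariant_theta_fibre[OF labelling]]
  by (simp add: psi_X_X mult.commute)

section \<open>Action of H on the root spaces\<close>

lemma H_gen_br_X_off_diagonal:
  assumes ij: "(i, j) \<in> Pairs4" and kl: "(k, l) \<in> Pairs4" and "(k, l) \<noteq> (i, j)" "(k, l) \<noteq> (j, i)"
  shows "\<exists>e. br (br (X i j a) (X j i b)) (X k l c) = X k l e \<and>
    abs_r2 e = (H_weight i j a b k + H_weight i j a b l) * abs_r2 c"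
proof -
  have r: "i \<in> {1..4}" "j \<in> {1..4}" "i \<noteq> j" "k \<in> {1..4}" "l \<in> {1..4}" "k \<noteq> l"
    using ij kl by (auto simp: Pairs4_iff)
  from assms show ?thesis
  proof (cases rule: off_diagonal_cases)
    case 1
    then show ?thesis using r
      by (intro exI[of _ "a * (b * c)"])
        (auto simp: br_br_left br_X_X Pairs4_iff H_weight_def abs_r2_mult ac_simps)
  next
    case 2
    then show ?thesis using r
      by (intro exI[of _ "- (b * (a * c))"])
        (auto simp: br_br_left br_X_X Pairs4_iff X_minus H_weight_def abs_r2_mult abs_r2_uminus ac_simps)
  next
    case 3
    then show ?thesis using r
      by (intro exI[of _ "- (c * a * b)"])
        (auto simp: br_br_left br_X_X Pairs4_iff X_minus H_weight_def abs_r2_mult abs_r2_uminus ac_simps)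
  next
    case 4
    then show ?thesis using r
      by (intro exI[of _ "c * b * a"])
        (auto simp: br_br_left br_X_X Pairs4_iff X_minus H_weight_def abs_r2_mult ac_simps)
  next
    case 5
    then show ?thesis using r
      by (intro exI[of _ 0]) (auto simp: br_br_left br_X_X_zero Pairs4_iff X_zero H_weight_def abs_r2_0)
  qed
qed

lemma X_br_H_gen_off_diagonal:
  assumes ij: "(i, j) \<in> Pairs4" and kl: "(k, l) \<in> Pairs4" and "(k, l) \<noteq> (i, j)" "(k, l) \<noteq> (j, i)"
  shows "\<exists>e. br (X k l c) (br (X i j a) (X j i b)) = X k l e \<and>
    abs_r2 e = (H_weight i j a b k + H_weight i j a b l) * abs_r2 c"
proof -
  have r: "i \<in> {1..4}" "j \<in> {1..4}" "i \<noteq> j" "k \<in> {1..4}" "l \<in> {1..4}" "k \<noteq> l"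
    using ij kl by (auto simp: Pairs4_iff)
  from assms show ?thesis
  proof (cases rule: off_diagonal_cases)
    case 1
    then show ?thesis using r
      by (intro exI[of _ "- (a * (b * c))"])
        (auto simp: br_br_right br_X_X Pairs4_iff X_minus H_weight_def abs_r2_mult abs_r2_uminus ac_simps)
  next
    case 2
    then show ?thesis using r
      by (intro exI[of _ "b * (a * c)"])
        (auto simp: br_br_right br_X_X Pairs4_iff X_minus H_weight_def abs_r2_mult ac_simps)
  next
    case 3
    then show ?thesis using r
      by (intro exI[of _ "c * a * b"])
        (auto simp: br_br_right br_X_X Pairs4_iff X_minus H_weight_def abs_r2_mult ac_simps)
  next
    case 4
    then show ?thesis using r
      by (intro exI[of _ "- (c * b * a)"])
        (auto simp: br_br_right br_X_X Pairs4_iff X_minus H_weight_def abs_r2_mult abs_r2_uminus ac_simps)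
  next
    case 5
    then show ?thesis using r
      by (intro exI[of _ 0]) (auto simp: br_br_right br_X_X_zero Pairs4_iff X_zero H_weight_def abs_r2_0)
  qed
qed

lemma H_gen_br_X:
  assumes ij: "(i, j) \<in> Pairs4" and kl: "(k, l) \<in> Pairs4"
  shows "\<exists>e. br (br (X i j a) (X j i b)) (X k l c) = X k l e \<and>
    abs_r2 e = (H_weight i j a b k + H_weight i j a b l) * abs_r2 c"
proof (cases "(k, l) = (i, j) \<or> (k, l) = (j, i)")
  case False
  then show ?thesis using H_gen_br_X_off_diagonal[OF ij kl] by blast
next
  case True
  let ?h = "br (X i j a) (X j i b)"
  \<comment> \<open>reach the diagonal root spaces through a third index t: X_kl(c) = [X_kt(c), X_tl(1)]\<close>
  obtain t where t: "t \<in> {1..4}" "t \<noteq> i" "t \<noteq> j" using ex_third_index by blast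
  have r: "k \<in> {1..4}" "l \<in> {1..4}" "k \<noteq> l" "t \<noteq> k" "t \<noteq> l"
    using True t kl by (auto simp: Pairs4_iff)
  then have kt: "(k, t) \<in> Pairs4" and tl: "(t, l) \<in> Pairs4" using t by (auto simp: Pairs4_iff)
  obtain e1 where e1: "br ?h (X k t c) = X k t e1"
    "abs_r2 e1 = (H_weight i j a b k + H_weight i j a b t) * abs_r2 c"
    using H_gen_br_X_off_diagonal[OF ij kt] t by blast
  obtain e2 where e2: "br ?h (X t l 1) = X t l e2"
    "abs_r2 e2 = (H_weight i j a b t + H_weight i j a b l) * abs_r2 1"
    using H_gen_br_X_off_diagonal[OF ij tl] t by blast
  have "br ?h (X k l c) = br ?h (br (X k t c) (X t l 1))"
    using r t by (simp add: br_X_X_chain)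
  also have "\<dots> = br (X k t e1) (X t l 1) - br (X t l e2) (X k t c)"
    by (simp add: br_br_right e1(1) e2(1))
  also have "\<dots> = X k l (e1 + c * e2)"
    using r t by (simp add: br_X_X X_add Pairs4_iff)
  finally show ?thesis using H_weight_chain[OF e1(2) e2(2)] by blast
qed

lemma X_br_H_gen:
  assumes ij: "(i, j) \<in> Pairs4" and kl: "(k, l) \<in> Pairs4"
  shows "\<exists>e. br (X k l c) (br (X i j a) (X j i b)) = X k l e \<and>
    abs_r2 e = (H_weight i j a b k + H_weight i j a b l) * abs_r2 c"
proof (cases "(k, l) = (i, j) \<or> (k, l) = (j, i)")
  case False
  then show ?thesis using X_br_H_gen_off_diagonal[OF ij kl] by blast
next
  case True
  let ?h = "br (X i j a) (X j i b)"
  obtain t where t: "t \<in> {1..4}" "t \<noteq> i" "t \<noteq> j" using ex_third_index by blast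
  have r: "k \<in> {1..4}" "l \<in> {1..4}" "k \<noteq> l" "t \<noteq> k" "t \<noteq> l"
    using True t kl by (auto simp: Pairs4_iff)
  then have kt: "(k, t) \<in> Pairs4" and tl: "(t, l) \<in> Pairs4" using t by (auto simp: Pairs4_iff)
  obtain e1 where e1: "br (X k t c) ?h = X k t e1"
    "abs_r2 e1 = (H_weight i j a b k + H_weight i j a b t) * abs_r2 c"
    using X_br_H_gen_off_diagonal[OF ij kt] t by blast
  obtain e2 where e2: "br (X t l 1) ?h = X t l e2"
    "abs_r2 e2 = (H_weight i j a b t + H_weight i j a b l) * abs_r2 1"
    using X_br_H_gen_off_diagonal[OF ij tl] t by blast
  have "br (X k l c) ?h = br (br (X k t c) (X t l 1)) ?h"
    using r t by (simp add: br_X_X_chain)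
  also have "\<dots> = br (X k t c) (X t l e2) + br (X k t e1) (X t l 1)"
    by (simp add: br_br_left e1(1) e2(1))
  also have "\<dots> = X k l (e1 + c * e2)"
    using r t by (simp add: br_X_X X_add Pairs4_iff add.commute)
  finally show ?thesis using H_weight_chain[OF e1(2) e2(2)] by blast
qed

lemma br_Hgen_Hgen_in_H:
  assumes "g \<in> Hgen" and "g' \<in> Hgen"
  shows "br g g' \<in> H"
proof -
  obtain i j a b k l c d where ij: "(i, j) \<in> Pairs4" and kl: "(k, l) \<in> Pairs4"
    and g: "g = br (X i j a) (X j i b)" and g': "g' = br (X k l c) (X l k d)"
    using assms unfolding Hgen_def by blast
  have lk: "(l, k) \<in> Pairs4" using kl by (auto simp: Pairs4_iff)
  obtain e1 where e1: "br g (X k l c) = X k l e1" using H_gen_br_X[OF ij kl] g by blast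
  obtain e2 where e2: "br g (X l k d) = X l k e2" using H_gen_br_X[OF ij lk] g by blast
  show ?thesis
    unfolding g' br_br_right e1 e2 by (intro H_diff br_X_X_opposite_in_H kl lk)
qed

lemma br_X_X_mod_H:
  assumes kl: "(k, l) \<in> Pairs4" and pq: "(p, q) \<in> Pairs4"
  obtains h where "h \<in> H"
    and "br (X k l b) (X p q c) = h + (if l = p \<and> k \<noteq> q then X k q (b * c) else 0)
      + (if k = q \<and> l \<noteq> p then - X p l (c * b) else 0)"
proof -
  have r: "k \<in> {1..4}" "l \<in> {1..4}" "k \<noteq> l" "p \<in> {1..4}" "q \<in> {1..4}" "p \<noteq> q"
    using kl pq by (auto simp: Pairs4_iff)
  consider "l = p" "k = q" | "l = p" "k \<noteq> q" | "l \<noteq> p" "k = q" | "l \<noteq> p" "k \<noteq> q"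
    by blast
  then show ?thesis
  proof cases
    case 1
    then show ?thesis using that br_X_X_opposite_in_H[OF kl] by auto
  next
    case 2
    then show ?thesis using that[OF H_zero] r by (simp add: br_X_X_chain)
  next
    case 3
    then show ?thesis using that[OF H_zero] r by (simp add: br_X_X_back)
  next
    case 4
    then show ?thesis using that[OF H_zero] kl pq by (simp add: br_X_X_zero)
  qed
qed

lemma psi_X_br_X_X:
  assumes ij: "(i, j) \<in> Pairs4" and kl: "(k, l) \<in> Pairs4" and pq: "(p, q) \<in> Pairs4"
  shows "psi m (X i j a) (br (X k l b) (X p q c)) =
    (if l = p \<and> (i, j, k, q) \<in> fibre m then abs_r2 a * abs_r2 b * abs_r2 c else 0)
  + (if k = q \<and> (i, j, p, l) \<in> fibre m then abs_r2 a * abs_r2 b * abs_r2 c else 0)"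
proof -
  obtain h where "h \<in> H" and h: "br (X k l b) (X p q c) = h
      + (if l = p \<and> k \<noteq> q then X k q (b * c) else 0)
      + (if k = q \<and> l \<noteq> p then - X p l (c * b) else 0)"
    using br_X_X_mod_H[OF kl pq] .
  then show ?thesis
    using ij kl pq by (auto simp: h psi_add_right psi_H_right psi_X_X Pairs4_iff P4_iff
      abs_r2_mult ac_simps)
qed

lemma psi_br_X_X_X:
  assumes ij: "(i, j) \<in> Pairs4" and kl: "(k, l) \<in> Pairs4" and pq: "(p, q) \<in> Pairs4"
  shows "psi m (br (X i j a) (X k l b)) (X p q c) =
    (if j = k \<and> (i, l, p, q) \<in> fibre m then abs_r2 a * abs_r2 b * abs_r2 c else 0)
  + (if i = l \<and> (k, j, p, q) \<in> fibre m then abs_r2 a * abs_r2 b * abs_r2 c else 0)"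
proof -
  obtain h where "h \<in> H" and h: "br (X i j a) (X k l b) = h
      + (if j = k \<and> i \<noteq> l then X i l (a * b) else 0)
      + (if i = l \<and> j \<noteq> k then - X k j (b * a) else 0)"
    using br_X_X_mod_H[OF ij kl] .
  then show ?thesis
    using ij kl pq by (auto simp: h psi_add_left psi_H_left psi_X_X Pairs4_iff P4_iff
      abs_r2_mult ac_simps)
qed

lemma psi_weights_cancel:
  assumes ij: "(i, j) \<in> Pairs4" and pq: "(p, q) \<in> Pairs4" and kl: "(k, l) \<in> Pairs4"
    and e1: "abs_r2 e1 = (H_weight k l c d i + H_weight k l c d j) * abs_r2 a"
    and e2: "abs_r2 e2 = (H_weight k l c d p + H_weight k l c d q) * abs_r2 e"
  shows "psi m (X i j e1) (X p q e) + psi m (X i j a) (X p q e2) = 0"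
proof (cases "(i, j, p, q) \<in> fibre m")
  case True
  have "psi m (X i j e1) (X p q e) + psi m (X i j a) (X p q e2) =
    (H_weight k l c d i + H_weight k l c d j + H_weight k l c d p + H_weight k l c d q)
      * (abs_r2 a * abs_r2 e)"
    using True by (simp add: psi_X_X ij pq e1 e2 algebra_simps)
  also have "\<dots> = 0"
    using H_weight_sum_P4[OF kl, of i j p q c d] True by simp
  finally show ?thesis .
next
  case False
  then show ?thesis by (auto simp: psi_X_X ij pq)
qed

section \<open>The cocycle defect\<close>

definition defect :: "nat \<Rightarrow> 'l \<Rightarrow> 'l \<Rightarrow> 'l \<Rightarrow> 'r r2" where
  "defect m x y z = psi m x (br y z) + psi m (br x z) y + psi m (br x y) z"

lemma psi_rep_cocycle_iff_defect:
  "psi_rep smul br X \<theta> m x (br y z) + psi_rep smul br X \<theta> m (br x z) y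
     - psi_rep smul br X \<theta> m (br x y) z \<in> I2 \<longleftrightarrow> defect m x y z = 0"
  by (simp add: abs_r2_eq_0_iff[symmetric] abs_r2_add abs_r2_diff defect_def psi_def)

lemma defect_add_left: "defect m (x + x') y z = defect m x y z + defect m x' y z"
  by (simp add: defect_def br_add_left psi_add_left ac_simps)

lemma defect_add_middle: "defect m x (y + y') z = defect m x y z + defect m x y' z"
  by (simp add: defect_def br_add_left br_add_right psi_add_left psi_add_right ac_simps)

lemma defect_add_right: "defect m x y (z + z') = defect m x y z + defect m x y z'"
  by (simp add: defect_def br_add_left br_add_right psi_add_left psi_add_right ac_simps)

lemma defect_scale_left: "defect m (smul k x) y z = abs_r2 (sR k 1) * defect m x y z"
  by (simp add: defect_def br_scale_left psi_scale_left distrib_left)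

lemma defect_scale_middle: "defect m x (smul k y) z = abs_r2 (sR k 1) * defect m x y z"
  by (simp add: defect_def br_scale_left br_scale_right psi_scale_left psi_scale_right distrib_left)

lemma defect_scale_right: "defect m x y (smul k z) = abs_r2 (sR k 1) * defect m x y z"
  by (simp add: defect_def br_scale_left br_scale_right psi_scale_left psi_scale_right distrib_left)

lemma defect_X_X_X:
  assumes ij: "(i, j) \<in> Pairs4" and kl: "(k, l) \<in> Pairs4" and pq: "(p, q) \<in> Pairs4"
  shows "defect m (X i j a) (X k l b) (X p q c) = 0"
proof -
  have r: "i \<in> {1..4}" "j \<in> {1..4}" "k \<in> {1..4}" "l \<in> {1..4}" "p \<in> {1..4}" "q \<in> {1..4}"
    and d: "i \<noteq> j" "k \<noteq> l" "p \<noteq> q"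
    using ij kl pq by (auto simp: Pairs4_iff)
  have cm: "abs_r2 a * abs_r2 c * abs_r2 b = abs_r2 a * abs_r2 b * abs_r2 c"
    by (simp add: ac_simps)
  show ?thesis
    unfolding defect_def psi_X_br_X_X[OF ij kl pq] psi_br_X_X_X[OF ij pq kl]
      psi_br_X_X_X[OF ij kl pq] cm
    using G_invariant_six_terms[OF G_invariant_theta_fibre[OF labelling] r2_add_self r d]
    by (simp only: add.assoc)
qed
lemma defect_H_X_X:
  assumes ij: "(i, j) \<in> Pairs4" and kl: "(k, l) \<in> Pairs4" and pq: "(p, q) \<in> Pairs4"
  shows "defect m (br (X i j a) (X j i b)) (X k l c) (X p q d) = 0"
proof -
  obtain e1 where e1: "br (br (X i j a) (X j i b)) (X k l c) = X k l e1"
    "abs_r2 e1 = (H_weight i j a b k + H_weight i j a b l) * abs_r2 c"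
    using H_gen_br_X[OF ij kl] by blast
  obtain e2 where e2: "br (br (X i j a) (X j i b)) (X p q d) = X p q e2"
    "abs_r2 e2 = (H_weight i j a b p + H_weight i j a b q) * abs_r2 d"
    using H_gen_br_X[OF ij pq] by blast
  have "defect m (br (X i j a) (X j i b)) (X k l c) (X p q d) =
      psi m (X k l e1) (X p q d) + psi m (X k l c) (X p q e2)"
    by (simp add: defect_def e1(1) e2(1) psi_H_left br_X_X_opposite_in_H ij
      psi_X_X_commute[OF pq kl] add.commute)
  also have "\<dots> = 0" by (rule psi_weights_cancel[OF kl pq ij e1(2) e2(2)])
  finally show ?thesis .
qed

lemma defect_X_H_X:
  assumes ij: "(i, j) \<in> Pairs4" and kl: "(k, l) \<in> Pairs4" and pq: "(p, q) \<in> Pairs4"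
  shows "defect m (X i j a) (br (X k l c) (X l k d)) (X p q e) = 0"
proof -
  obtain e1 where e1: "br (X i j a) (br (X k l c) (X l k d)) = X i j e1"
    "abs_r2 e1 = (H_weight k l c d i + H_weight k l c d j) * abs_r2 a"
    using X_br_H_gen[OF kl ij] by blast
  obtain e2 where e2: "br (br (X k l c) (X l k d)) (X p q e) = X p q e2"
    "abs_r2 e2 = (H_weight k l c d p + H_weight k l c d q) * abs_r2 e"
    using H_gen_br_X[OF kl pq] by blast
  have "defect m (X i j a) (br (X k l c) (X l k d)) (X p q e) =
      psi m (X i j e1) (X p q e) + psi m (X i j a) (X p q e2)"
    by (simp add: defect_def e1(1) e2(1) psi_H_right br_X_X_opposite_in_H kl add.commute)
  also have "\<dots> = 0" by (rule psi_weights_cancel[OF ij pq kl e1(2) e2(2)])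
  finally show ?thesis .
qed

lemma defect_X_X_H:
  assumes ij: "(i, j) \<in> Pairs4" and kl: "(k, l) \<in> Pairs4" and pq: "(p, q) \<in> Pairs4"
  shows "defect m (X i j a) (X p q e) (br (X k l c) (X l k d)) = 0"
proof -
  obtain e1 where e1: "br (X i j a) (br (X k l c) (X l k d)) = X i j e1"
    "abs_r2 e1 = (H_weight k l c d i + H_weight k l c d j) * abs_r2 a"
    using X_br_H_gen[OF kl ij] by blast
  obtain e2 where e2: "br (X p q e) (br (X k l c) (X l k d)) = X p q e2"
    "abs_r2 e2 = (H_weight k l c d p + H_weight k l c d q) * abs_r2 e"
    using X_br_H_gen[OF kl pq] by blast
  have "defect m (X i j a) (X p q e) (br (X k l c) (X l k d)) =
      psi m (X i j e1) (X p q e) + psi m (X i j a) (X p q e2)"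
    by (simp add: defect_def e1(1) e2(1) psi_H_right br_X_X_opposite_in_H kl add.commute)
  also have "\<dots> = 0" by (rule psi_weights_cancel[OF ij pq kl e1(2) e2(2)])
  finally show ?thesis .
qed

lemma defect_two_Hgen:
  assumes "x \<in> Hgen \<and> y \<in> Hgen \<or> x \<in> Hgen \<and> z \<in> Hgen \<or> y \<in> Hgen \<and> z \<in> Hgen"
  shows "defect m x y z = 0"
proof -
  have H: "g \<in> Hgen \<Longrightarrow> g \<in> H" for g
    using Hgen_subset_H by blast
  from assms show ?thesis
    by (elim disjE conjE) (simp_all add: defect_def H psi_H_left psi_H_right br_Hgen_Hgen_in_H)
qed

lemma defect_generators:
  assumes "x \<in> Hgen \<union> Xgen" and "y \<in> Hgen \<union> Xgen" and "z \<in> Hgen \<union> Xgen"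
  shows "defect m x y z = 0"
proof (cases "x \<in> Hgen \<and> y \<in> Hgen \<or> x \<in> Hgen \<and> z \<in> Hgen \<or> y \<in> Hgen \<and> z \<in> Hgen")
  case True
  then show ?thesis by (rule defect_two_Hgen)
next
  case False
  then consider "x \<in> Hgen" "y \<in> Xgen" "z \<in> Xgen" | "x \<in> Xgen" "y \<in> Hgen" "z \<in> Xgen"
    | "x \<in> Xgen" "y \<in> Xgen" "z \<in> Hgen" | "x \<in> Xgen" "y \<in> Xgen" "z \<in> Xgen"
    using assms by blast
  then show ?thesis
  proof cases
    case 1
    then obtain i j a b k l c p q d where "(i, j) \<in> Pairs4" "(k, l) \<in> Pairs4" "(p, q) \<in> Pairs4"
      and "x = br (X i j a) (X j i b)" "y = X k l c" "z = X p q d"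
      unfolding Hgen_def Xgen_def by blast
    then show ?thesis by (simp add: defect_H_X_X)
  next
    case 2
    then obtain i j a k l c d p q e where "(i, j) \<in> Pairs4" "(k, l) \<in> Pairs4" "(p, q) \<in> Pairs4"
      and "x = X i j a" "y = br (X k l c) (X l k d)" "z = X p q e"
      unfolding Hgen_def Xgen_def by blast
    then show ?thesis by (simp add: defect_X_H_X)
  next
    case 3
    then obtain i j a p q e k l c d where "(i, j) \<in> Pairs4" "(p, q) \<in> Pairs4" "(k, l) \<in> Pairs4"
      and "x = X i j a" "y = X p q e" "z = br (X k l c) (X l k d)"
      unfolding Hgen_def Xgen_def by blast
    then show ?thesis by (simp add: defect_X_X_H)
  next
    case 4
    then obtain i j a k l b p q c where "(i, j) \<in> Pairs4" "(k, l) \<in> Pairs4" "(p, q) \<in> Pairs4"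
      and "x = X i j a" "y = X k l b" "z = X p q c"
      unfolding Xgen_def by blast
    then show ?thesis by (simp add: defect_X_X_X)
  qed
qed

lemma defect_eq_0: "defect m x y z = 0"
proof -
  let ?s = "\<lambda>k. abs_r2 (sR k 1)"
  have two_generators: "defect m x y z = 0" if "x \<in> Hgen \<union> Xgen" "y \<in> Hgen \<union> Xgen" for x y
    by (rule eq_0_if_vanishes_on_generators[where f = "defect m x y" and s = ?s])
      (simp add: defect_add_right, simp add: defect_scale_right, rule defect_generators[OF that])
  have one_generator: "defect m x y z = 0" if "x \<in> Hgen \<union> Xgen" for x
    by (rule eq_0_if_vanishes_on_generators[where f = "\<lambda>y. defect m x y z" and s = ?s])
      (simp add: defect_add_middle, simp add: defect_scale_middle, rule two_generators[OF that])
  show ?thesis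
    by (rule eq_0_if_vanishes_on_generators[where f = "\<lambda>x. defect m x y z" and s = ?s])
      (simp add: defect_add_left, simp add: defect_scale_left, rule one_generator)
qed

end

theorem lemma3p3:
  fixes smul :: "'k::comm_ring_1 \<Rightarrow> 'l::ab_group_add \<Rightarrow> 'l"
    and br :: "'l \<Rightarrow> 'l \<Rightarrow> 'l"
    and sR :: "'k \<Rightarrow> 'r::ring_1 \<Rightarrow> 'r"
    and X :: "nat \<Rightarrow> nat \<Rightarrow> 'r \<Rightarrow> 'l"
    and \<theta> :: "nat \<times> nat \<times> nat \<times> nat \<Rightarrow> nat"
  assumes "K_algebra sR"
    and "free_with_one_basis sR"
    and "leibniz_algebra smul br"
    and "stl4_relations smul br sR X"
    and "stl4_decomposition smul br X"
    and "theta_labelling \<theta>"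
  shows "\<forall>x y z. \<forall>m\<in>{1..6}.
           psi_rep smul br X \<theta> m x (br y z) + psi_rep smul br X \<theta> m (br x z) y
             - psi_rep smul br X \<theta> m (br x y) z \<in> I2"
proof -
  \<comment> \<open>freeness of R is only needed to obtain the decomposition of stl_4(R), which is assumed\<close>
  interpret stl4 smul br sR X \<theta>
    using assms(1,3-6) by (rule stl4.intro)
  show ?thesis
    by (simp add: psi_rep_cocycle_iff_defect defect_eq_0)
qed

end
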